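(* Let $n\ge 1$, $m$, $\hbar\neq 0$ be constants and let $\omega^0,\omega^1\in(-\pi/2,\pi/2]$. Let $a_\ast$ be a nowhere vanishing, differentiable complex-valued function of $t\in\mathbb{R}$ such that $\theta:=\arg a_\ast(t)$ is a constant independent of $t$. Let $b_0\in\mathbb{C}\setminus\{0\}$ and define $w_\ast(t):=b_0\big(a_\ast(0)/a_\ast(t)\big)^{n/2}$. Put $C_0:=2me^{i\omega^0}/\hbar$ and assume $C_0\in\mathbb{R}$. Let $V_0,V_0'$ be functions on $\mathbb{C}$ with $\mathrm{Im}\{\bar z\,V_0'(z)\}=0$ for all $z\in\mathbb{C}$. Let $u_\ast=u_\ast(t,x)$, $(t,x)\in\mathbb{R}\times\mathbb{R}^n$, be a complex-valued solution (for a fixed choice of sign $\pm$) of $$\pm i\,C_0\,\partial_t u_\ast+\frac{e^{2i\omega^0}}{e^{2i(\theta+\omega^1)}}\left(\frac{1}{|a_\ast|^2}\Delta_x u_\ast-\frac{1}{w_\ast}V_0'(u_\ast w_\ast)\right)=0,$$ where $\Delta_x=\sum_{j=1}^n\partial^2/(\partial x^j)^2$, which is sufficiently smooth and decays at spatial infinity so that all integrals below are finite and integrals over $\mathbb{R}^n$ of spatial divergences vanish. (1) (Charge estimate.) For every $t$, $$\pm\int_{\mathbb{R}^n}e_C^0(t,x)\,dx+\int_0^t\int_{\mathbb{R}^n}e_C^{n+1}(s,x)\,dx\,ds=\pm\int_{\mathbb{R}^n}e_C^0(0,x)\,dx,$$ where $e_C^0:=C_0|u_\ast|^2$ and $$e_C^{n+1}:=2\,\mathrm{Im}\Big(\frac{e^{2i(\theta+\omega^1)}}{e^{2i\omega^0}}\Big)\left(\frac{1}{|a_\ast|^2}\sum_{j=1}^n|\partial_{x^j}u_\ast|^2+\frac{1}{|w_\ast|^2}\overline{u_\ast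 w_\ast}\,V_0'(u_\ast w_\ast)\right).$$ (2) (Energy estimate.) Assume in addition that $\partial_t V_0(\psi)=\mathrm{Re}\,\big(\partial_t\overline{\psi}\,V_0'(\psi)\big)$ for every function $\psi=\psi(t,x)$. Then for every $t$, $$\int_{\mathbb{R}^n}e_E^0(t,x)\,dx+\int_0^t\int_{\mathbb{R}^n}e_E^{n+1}(s,x)\,dx\,ds=\int_{\mathbb{R}^n}e_E^0(0,x)\,dx,$$ where $$e_E^0:=\sum_{j=1}^n|\partial_{x^j}u_\ast|^2+\frac{2|a_\ast|^2}{|w_\ast|^2}V_0(u_\ast w_\ast)$$ and $$e_E^{n+1}:=\pm2C_0\,\mathrm{Im}\Big(\frac{e^{2i(\theta+\omega^1)}}{e^{2i\omega^0}}\Big)|a_\ast|^2|\partial_t u_\ast|^2+\frac{n}{2|w_\ast|^2}\big(\partial_t|a_\ast|^2\big)\left(\overline{u_\ast w_\ast}\,V_0'(u_\ast w_\ast)-\frac{2(n+2)}{n}V_0(u_\ast w_\ast)\right).$$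
   Context: Here $a_\ast$ plays the role of a (complex) scale-function of space and $w_\ast$ is a weight function built from it; any fixed branch of the power $(\cdot)^{n/2}$ may be used in the definition of $w_\ast$ (only $|w_\ast|^2=|b_0|^2|a_\ast(0)|^n/|a_\ast(t)|^n$ enters the identities beyond the equation itself). The sign $\pm$ is the same throughout each statement. *)

theory Defs
  imports "HOL-Analysis.Analysis"
begin

text \<open>Partial derivative in direction of the j-th coordinate axis of real^'n
  (meaningful when the directional derivative exists).\<close>
definition pdx :: "'n::finite \<Rightarrow> (real^'n \<Rightarrow> complex) \<Rightarrow> real^'n \<Rightarrow> complex" where
  "pdx j f x = vector_derivative (\<lambda>h. f (x + h *\<^sub>R axis j 1)) (at 0)"

definition spatial_div_integral_vanishes :: "('n::finite \<Rightarrow> real^'n \<Rightarrow> complex) \<Rightarrow> bool" where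
  "spatial_div_integral_vanishes F \<longleftrightarrow>
     integrable lborel (\<lambda>x. \<Sum>j\<in>UNIV. pdx j (F j) x) \<and>
     (\<integral>x. (\<Sum>j\<in>UNIV. pdx j (F j) x) \<partial>lborel) = 0"

definition time_diff_under_integral :: "(real \<Rightarrow> real^'n::finite \<Rightarrow> complex) \<Rightarrow> bool" where
  "time_diff_under_integral f \<longleftrightarrow>
     (\<forall>t. integrable lborel (\<lambda>x. vector_derivative (\<lambda>s. f s x) (at t)) \<and>
          ((\<lambda>s. \<integral>x. f s x \<partial>lborel) has_vector_derivative
             (\<integral>x. vector_derivative (\<lambda>s. f s x) (at t) \<partial>lborel)) (at t))"

definition C0 :: "real \<Rightarrow> real \<Rightarrow> real \<Rightarrow> complex" where
  "C0 m hbar \<omega>0 = 2 * of_real m * exp (\<i> * of_real \<omega>0) / of_real hbar"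

text \<open>w_*(t) = b_0 (a_*(0)/a_*(t))^{n/2}, principal branch of the power\<close>
definition wstar :: "nat \<Rightarrow> complex \<Rightarrow> (real \<Rightarrow> complex) \<Rightarrow> real \<Rightarrow> complex" where
  "wstar n b0 a t = b0 * (a 0 / a t) powr (of_nat n / 2)"

definition kfac :: "real \<Rightarrow> real \<Rightarrow> real \<Rightarrow> complex" where
  "kfac \<omega>0 \<theta> \<omega>1 = exp (2 * \<i> * of_real \<omega>0) / exp (2 * \<i> * of_real (\<theta> + \<omega>1))"

end

theory Submission
  imports Defs
begin

(* Both identities integrate a pointwise balance law
     c * d/dt e(t,x) + f(t,x) = Lambda_t (div F(t,.) x)
   with Lambda_t real-linear: integrating over R^n kills the divergence, and the fundamental
   theorem of calculus in t gives the claim. For the charge F = conj u * grad u and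
   Lambda_t z = -2 Im (k z) / |a(t)|^2; for the energy F = conj u_t * grad u and Lambda_t z = 2 Re z.
   The pointwise laws come from solving the equation for C u_t and taking real parts; the
   potential terms are real because conj z * V0'(z) is. Since a has constant argument,
   w(t) = b0 (|a(0)|^2 / |a(t)|^2)^(n/4) is a real multiple of b0, and its logarithmic derivative
   -(n/4) (d/dt |a|^2) / |a|^2 is what produces the d/dt |a|^2 term of the energy flux. *)

lemma interval_integral_FTC_everywhere:
  fixes F f :: "real \<Rightarrow> 'a::euclidean_space"
  assumes F: "\<And>s. (F has_vector_derivative f s) (at s)"
    and f: "interval_lebesgue_integrable lborel a b f"
  shows "(LBINT s=a..b. f s) = F b - F a"
proof -
  have FTC_le: "(LBINT s=a..b. f s) = F b - F a"
    if "a \<le> b" "interval_lebesgue_integrable lborel a b f" for a b :: real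
  proof -
    have "(LBINT s=a..b. f s) = integral (einterval a b) f"
      using that by (intro interval_integral_eq_integral')
        (simp_all add: interval_lebesgue_integrable_def)
    also have "\<dots> = integral {a..b} f"
      by (simp add: integral_open_interval_real)
    also have "\<dots> = F b - F a"
      using that F by (intro integral_unique fundamental_theorem_of_calculus)
        (auto intro: has_vector_derivative_at_within)
    finally show ?thesis .
  qed
  show ?thesis
  proof (cases "a \<le> b")
    case True
    with f show ?thesis by (rule FTC_le[rotated])
  next
    case False
    have "(LBINT s=a..b. f s) = - (LBINT s=b..a. f s)"
      by (rule interval_integral_endpoints_reverse)
    also have "\<dots> = F b - F a"
      using False f by (subst FTC_le) (auto simp: interval_integrable_endpoints_reverse)
    finally show ?thesis .
  qed
qed

lemma integrated_balance_law:
  fixes e en :: "real \<Rightarrow> real^'n::finite \<Rightarrow> complex"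
    and F :: "real \<Rightarrow> 'n \<Rightarrow> real^'n \<Rightarrow> complex" and \<Lambda> :: "real \<Rightarrow> complex \<Rightarrow> complex"
  assumes e: "time_diff_under_integral e"
    and balance: "\<And>t x. c * vector_derivative (\<lambda>s. e s x) (at t) + en t x
                     = \<Lambda> t (\<Sum>j\<in>UNIV. pdx j (F t j) x)"
    and \<Lambda>: "\<And>t. bounded_linear (\<Lambda> t)"
    and F: "\<And>t. spatial_div_integral_vanishes (F t)"
    and en: "\<And>t. integrable lborel (en t)"
    and en_time: "interval_lebesgue_integrable lborel 0 (ereal t) (\<lambda>s. \<integral>x. en s x \<partial>lborel)"
  shows "c * (\<integral>x. e t x \<partial>lborel) + (LBINT s=0..t. \<integral>x. en s x \<partial>lborel)
           = c * (\<integral>x. e 0 x \<partial>lborel)"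
proof -
  have e_rate: "(\<integral>x. c * vector_derivative (\<lambda>s. e s x) (at t) \<partial>lborel)
                  = - (\<integral>x. en t x \<partial>lborel)" for t
  proof -
    let ?D = "\<lambda>x. \<Sum>j\<in>UNIV. pdx j (F t j) x"
    have D: "integrable lborel ?D" "(\<integral>x. ?D x \<partial>lborel) = 0"
      using F[of t] unfolding spatial_div_integral_vanishes_def by auto
    have "(\<integral>x. c * vector_derivative (\<lambda>s. e s x) (at t) \<partial>lborel)
            = (\<integral>x. \<Lambda> t (?D x) - en t x \<partial>lborel)"
      by (intro Bochner_Integration.integral_cong refl) (metis add_diff_cancel_right' balance)
    also have "\<dots> = \<Lambda> t (\<integral>x. ?D x \<partial>lborel) - (\<integral>x. en t x \<partial>lborel)"
      using integrable_bounded_linear[OF \<Lambda> D(1)] integral_bounded_linear[OF \<Lambda> D(1)] en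
      by simp
    finally show ?thesis
      using D \<Lambda>[of t] by (simp add: linear_simps)
  qed
  have "((\<lambda>s. - (c * (\<integral>x. e s x \<partial>lborel))) has_vector_derivative (\<integral>x. en s x \<partial>lborel)) (at s)"
    for s
  proof -
    have "((\<lambda>s. \<integral>x. e s x \<partial>lborel) has_vector_derivative
            (\<integral>x. vector_derivative (\<lambda>s. e s x) (at s) \<partial>lborel)) (at s)"
      using e unfolding time_diff_under_integral_def by blast
    then show ?thesis
      using e_rate[of s] e unfolding time_diff_under_integral_def
      by (auto intro!: derivative_eq_intros)
  qed
  from interval_integral_FTC_everywhere[OF this] en_time
  show ?thesis by (simp add: zero_ereal_def)
qed

lemma pdx_cnj_mult:
  assumes "((\<lambda>h. f (x + h *\<^sub>R axis j 1)) has_vector_derivative f') (at 0)"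
    and "((\<lambda>h. g (x + h *\<^sub>R axis j 1)) has_vector_derivative g') (at 0)"
  shows "pdx j (\<lambda>x. cnj (f x) * g x) x = cnj f' * g x + cnj (f x) * g'"
proof -
  have "((\<lambda>h. cnj (f (x + h *\<^sub>R axis j 1)) * g (x + h *\<^sub>R axis j 1)) has_vector_derivative
          cnj (f x) * g' + cnj f' * g x) (at 0)"
    using has_vector_derivative_mult[OF has_vector_derivative_cnj assms(2), OF assms(1)] by simp
  then show ?thesis
    unfolding pdx_def by (simp add: vector_derivative_at)
qed

lemma divide_eq_of_real_if_Arg_eq:
  assumes "z \<noteq> 0" "Arg w = Arg z"
  shows "w / z = of_real (cmod w / cmod z)"
  using rcis_cmod_Arg[of w] rcis_cmod_Arg[of z] assms
  by (metis (no_types, lifting) cis_neq_zero divide_divide_eq_left' nonzero_mult_div_cancel_right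
      of_real_divide rcis_def)

lemma powr_ratio_has_real_derivative:
  fixes \<rho> :: "real \<Rightarrow> real"
  assumes pos: "\<And>s. \<rho> s > 0" and \<rho>: "(\<rho> has_real_derivative \<rho>') (at t)"
  shows "((\<lambda>s. (\<rho> 0 / \<rho> s) powr q) has_real_derivative
           - q * \<rho>' / \<rho> t * (\<rho> 0 / \<rho> t) powr q) (at t)"
proof -
  have "((\<lambda>s. (\<rho> 0 / \<rho> s) powr q) has_real_derivative
          q * (\<rho> 0 / \<rho> t) powr (q - 1) * (- (\<rho> 0 * \<rho>') / (\<rho> t * \<rho> t))) (at t)"
    using pos[of 0] pos[of t]
    by (auto intro!: derivative_eq_intros \<rho> simp: power2_eq_square)
  then show ?thesis
    using pos[of 0] pos[of t] by (simp add: powr_diff field_simps)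
qed

(* C, k and \<sigma> stand for C_0, e^(2 i omega^0) / e^(2 i (theta + omega^1)) and the sign;
   only C \<in> \<real> and |k| = 1 are used. *)
locale scaled_nls_solution =
  fixes n :: nat and \<sigma> :: real and C k b0 :: complex and a :: "real \<Rightarrow> complex" and \<theta> :: real
    and V' :: "complex \<Rightarrow> complex"
    and u ut :: "real \<Rightarrow> real^'n::finite \<Rightarrow> complex"
    and ux uxx :: "'n \<Rightarrow> real \<Rightarrow> real^'n \<Rightarrow> complex"
  assumes sign: "\<sigma> * \<sigma> = 1"
    and C_real: "C \<in> \<real>"
    and k_unimodular: "cmod k = 1"
    and a_nonzero: "a t \<noteq> 0"
    and a_differentiable: "a differentiable (at t)"
    and Arg_a: "Arg (a t) = \<theta>"
    and b0_nonzero: "b0 \<noteq> 0"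
    and V'_radial: "Im (cnj z * V' z) = 0"
    and ut: "((\<lambda>s. u s x) has_vector_derivative ut t x) (at t)"
    and ux: "((\<lambda>h. u t (x + h *\<^sub>R axis j 1)) has_vector_derivative ux j t x) (at 0)"
    and uxx: "((\<lambda>h. ux j t (x + h *\<^sub>R axis j 1)) has_vector_derivative uxx j t x) (at 0)"
    and equation: "\<sigma> * \<i> * C * ut t x
          + k * (of_real (1 / (cmod (a t))\<^sup>2) * (\<Sum>j\<in>UNIV. uxx j t x)
                 - 1 / wstar n b0 a t * V' (u t x * wstar n b0 a t)) = 0"
begin

abbreviation "w \<equiv> wstar n b0 a"
abbreviation "\<rho> t \<equiv> (cmod (a t))\<^sup>2"

lemma \<rho>_pos: "\<rho> t > 0"
  using a_nonzero by simp

lemma \<rho>_has_real_derivative: "(\<rho> has_real_derivative deriv \<rho> t) (at t)"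
proof -
  have "((\<lambda>s. a s * cnj (a s)) has_vector_derivative
          a t * cnj (vector_derivative a (at t)) + vector_derivative a (at t) * cnj (a t)) (at t)"
    using a_differentiable[of t]
    by (intro has_vector_derivative_mult has_vector_derivative_cnj)
      (simp_all add: vector_derivative_works)
  then have "((\<lambda>s. Re (a s * cnj (a s))) has_real_derivative
          Re (a t * cnj (vector_derivative a (at t)) + vector_derivative a (at t) * cnj (a t))) (at t)"
    by (rule has_field_derivative_Re)
  then have "\<rho> differentiable (at t)"
    by (auto simp: real_differentiable_def complex_norm_square[symmetric] simp del: of_real_power)
  then show ?thesis
    by (simp add: DERIV_deriv_iff_real_differentiable)
qed

(* a(0)/a(t) is a positive real, so the principal complex power in wstar is a real power. *)
lemma w_eq: "w t = b0 * of_real ((\<rho> 0 / \<rho> t) powr (n / 4))"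
proof -
  have "a 0 / a t = of_real (cmod (a 0) / cmod (a t))"
    using a_nonzero Arg_a by (intro divide_eq_of_real_if_Arg_eq) auto
  moreover have "(of_nat n / 2 :: complex) = of_real (n / 2)"
    by simp
  ultimately have "(a 0 / a t) powr (of_nat n / 2) = of_real ((cmod (a 0) / cmod (a t)) powr (n / 2))"
    by (simp only: powr_of_real divide_nonneg_nonneg norm_ge_zero)
  moreover have "\<rho> 0 / \<rho> t = (cmod (a 0) / cmod (a t)) powr 2"
    by (simp add: power_divide)
  then have "(cmod (a 0) / cmod (a t)) powr (n / 2) = (\<rho> 0 / \<rho> t) powr (n / 4)"
    by (simp only: powr_powr) simp
  ultimately show ?thesis
    unfolding wstar_def by simp
qed

lemma w_nonzero: "w t \<noteq> 0"
  using b0_nonzero \<rho>_pos[of 0] \<rho>_pos[of t] by (simp add: w_eq)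

lemma w_has_vector_derivative:
  "(w has_vector_derivative of_real (- (n / 4) * deriv \<rho> t / \<rho> t) * w t) (at t)"
proof -
  have "((\<lambda>s. b0 * of_real ((\<rho> 0 / \<rho> s) powr (n / 4))) has_vector_derivative
          b0 * of_real (- (n / 4) * deriv \<rho> t / \<rho> t * (\<rho> 0 / \<rho> t) powr (n / 4))) (at t)"
    by (intro has_vector_derivative_mult_right has_vector_derivative_of_real
        powr_ratio_has_real_derivative \<rho>_pos \<rho>_has_real_derivative)
  moreover have "w = (\<lambda>s. b0 * of_real ((\<rho> 0 / \<rho> s) powr (n / 4)))"
    by (simp add: fun_eq_iff w_eq)
  ultimately show ?thesis
    by (simp add: w_eq algebra_simps)
qed

(* 2 \<rho> / |w|^2 is a constant multiple of \<rho>^(1 + n/2); the name P keeps the derivative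
   rules from unfolding \<rho>. *)
lemma potential_weight_has_real_derivative:
  "((\<lambda>s. 2 * \<rho> s / (cmod (w s))\<^sup>2) has_real_derivative
      (n + 2) * deriv \<rho> t / (cmod (w t))\<^sup>2) (at t)"
proof -
  define P where "P = \<rho>"
  define \<phi> where "\<phi> s = (P 0 / P s) powr (n / 4)" for s
  have P_pos: "P s > 0" for s
    unfolding P_def by (rule \<rho>_pos)
  have \<phi>_pos: "\<phi> s > 0" for s
    using P_pos[of 0] P_pos[of s] by (simp add: \<phi>_def)
  have w: "(cmod (w s))\<^sup>2 = (cmod b0)\<^sup>2 * (\<phi> s)\<^sup>2" for s
    using \<phi>_pos[of s] by (simp add: w_eq \<phi>_def P_def norm_mult power_mult_distrib)
  have P: "(P has_real_derivative deriv P t) (at t)"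
    unfolding P_def by (rule \<rho>_has_real_derivative)
  have \<phi>: "(\<phi> has_real_derivative - (n / 4) * deriv P t / P t * \<phi> t) (at t)"
    unfolding \<phi>_def[abs_def] using P_pos P by (rule powr_ratio_has_real_derivative)
  have "((\<lambda>s. 2 * P s / ((cmod b0)\<^sup>2 * (\<phi> s)\<^sup>2)) has_real_derivative
          (2 * deriv P t * ((cmod b0)\<^sup>2 * (\<phi> t)\<^sup>2)
           - 2 * P t * ((cmod b0)\<^sup>2 * (2 * \<phi> t * (- (n / 4) * deriv P t / P t * \<phi> t))))
          / ((cmod b0)\<^sup>2 * (\<phi> t)\<^sup>2)\<^sup>2) (at t)"
    using b0_nonzero \<phi>_pos[of t]
    by (auto intro!: derivative_eq_intros P \<phi> simp: power2_eq_square)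
  then have "((\<lambda>s. 2 * P s / (cmod (w s))\<^sup>2) has_real_derivative
               (n + 2) * deriv P t / (cmod (w t))\<^sup>2) (at t)"
    unfolding w by (rule DERIV_cong)
      (use b0_nonzero \<phi>_pos[of t] P_pos[of t] in \<open>simp add: field_simps power2_eq_square\<close>)
  then show ?thesis
    unfolding P_def .
qed

abbreviation "\<Delta> t x \<equiv> \<Sum>j\<in>UNIV. uxx j t x"
abbreviation "\<psi> t x \<equiv> u t x * w t"

lemma inverse_k: "1 / k = cnj k"
proof -
  have "k \<noteq> 0" "k * cnj k = 1"
    using k_unimodular complex_norm_square[of k] by auto
  then show ?thesis
    by (simp add: field_simps)
qed

lemma C_ut_eq: "C * ut t x = \<sigma> * \<i> * k * (of_real (1 / \<rho> t) * \<Delta> t x - 1 / w t * V' (\<psi> t x))"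
proof -
  have "C * ut t x = - (\<sigma> * \<i>) * (\<sigma> * \<i> * C * ut t x)"
    using sign by (simp add: algebra_simps flip: of_real_mult)
  also have "\<sigma> * \<i> * C * ut t x = - (k * (of_real (1 / \<rho> t) * \<Delta> t x - 1 / w t * V' (\<psi> t x)))"
    using equation[of t x] by (simp only: eq_neg_iff_add_eq_0)
  finally show ?thesis
    by simp
qed

lemma V'_over_w_eq:
  "1 / w t * V' (\<psi> t x) = of_real (1 / \<rho> t) * \<Delta> t x + \<sigma> * \<i> * cnj k * (C * ut t x)"
proof -
  have "\<sigma> * \<i> * cnj k * (C * ut t x) = of_real (\<sigma> * \<sigma>) * (cnj k * k) * (\<i> * \<i>)
          * (of_real (1 / \<rho> t) * \<Delta> t x - 1 / w t * V' (\<psi> t x))"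
    unfolding C_ut_eq by (simp add: algebra_simps)
  also have "\<dots> = 1 / w t * V' (\<psi> t x) - of_real (1 / \<rho> t) * \<Delta> t x"
    using sign k_unimodular complex_norm_square[of k] by (simp add: mult.commute)
  finally show ?thesis
    by simp
qed

lemma cnj_\<psi>_V'_real: "cnj (\<psi> t x) * V' (\<psi> t x) = of_real (Re (cnj (\<psi> t x) * V' (\<psi> t x)))"
  using V'_radial[of "\<psi> t x"] by (simp only: complex_is_Real_iff[symmetric] of_real_Re)

definition "charge_density t x = C * of_real ((cmod (u t x))\<^sup>2)"

definition "charge_flux t x = 2 * of_real (Im (1 / k)) *
  (of_real (1 / \<rho> t) * (\<Sum>j\<in>UNIV. of_real ((cmod (ux j t x))\<^sup>2))
   + of_real (1 / (cmod (w t))\<^sup>2) * cnj (\<psi> t x) * V' (\<psi> t x))"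

lemma charge_density_time_derivative:
  "vector_derivative (\<lambda>s. charge_density s x) (at t) = C * (ut t x * cnj (u t x) + u t x * cnj (ut t x))"
proof -
  have "((\<lambda>s. C * (u s x * cnj (u s x))) has_vector_derivative
          C * (ut t x * cnj (u t x) + u t x * cnj (ut t x))) (at t)"
    using ut by (auto intro!: derivative_eq_intros simp: algebra_simps)
  then show ?thesis
    unfolding charge_density_def by (simp add: vector_derivative_at complex_norm_square[symmetric])
qed

lemma charge_divergence:
  "(\<Sum>j\<in>UNIV. pdx j (\<lambda>x. cnj (u t x) * ux j t x) x)
     = (\<Sum>j\<in>UNIV. of_real ((cmod (ux j t x))\<^sup>2)) + cnj (u t x) * \<Delta> t x"
proof -
  have "(\<Sum>j\<in>UNIV. pdx j (\<lambda>x. cnj (u t x) * ux j t x) x)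
          = (\<Sum>j\<in>UNIV. cnj (ux j t x) * ux j t x + cnj (u t x) * uxx j t x)"
    by (intro sum.cong refl pdx_cnj_mult ux uxx)
  then show ?thesis
    by (simp add: sum.distrib sum_distrib_left complex_norm_square[symmetric] mult.commute)
qed

lemma charge_balance:
  "\<sigma> * vector_derivative (\<lambda>s. charge_density s x) (at t) + charge_flux t x
     = of_real (- 2 * Im (k * (\<Sum>j\<in>UNIV. pdx j (\<lambda>x. cnj (u t x) * ux j t x) x)) / \<rho> t)"
proof -
  define E where "E = of_real (1 / \<rho> t) * \<Delta> t x - 1 / w t * V' (\<psi> t x)"
  define Y where "Y = k * cnj (u t x) * E"
  define G where "G = (\<Sum>j\<in>UNIV. (cmod (ux j t x))\<^sup>2)"
  define R where "R = Re (cnj (\<psi> t x) * V' (\<psi> t x))"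
  define J where "J = Im (k * cnj (u t x) * \<Delta> t x)"
  have R: "cnj (\<psi> t x) * V' (\<psi> t x) = of_real R"
    unfolding R_def by (rule cnj_\<psi>_V'_real)
  have "C * (ut t x * cnj (u t x) + u t x * cnj (ut t x)) = of_real (2 * Re (cnj (u t x) * (C * ut t x)))"
    using C_real by (auto simp: complex_eq_iff algebra_simps elim!: Reals_cases)
  also have "cnj (u t x) * (C * ut t x) = \<sigma> * (\<i> * Y)"
    unfolding C_ut_eq E_def Y_def by (simp add: algebra_simps)
  finally have time: "\<sigma> * vector_derivative (\<lambda>s. charge_density s x) (at t) = of_real (- 2 * Im Y)"
    using sign by (simp add: charge_density_time_derivative mult.assoc[symmetric] flip: of_real_mult)
  have "cnj (u t x) * V' (\<psi> t x) / w t = cnj (\<psi> t x) * V' (\<psi> t x) / (w t * cnj (w t))"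
    using w_nonzero[of t] by (simp add: field_simps)
  then have quotient: "cnj (u t x) * V' (\<psi> t x) / w t = of_real (R / (cmod (w t))\<^sup>2)"
    unfolding R by (simp only: complex_norm_square of_real_divide)
  have "Y = k * cnj (u t x) * \<Delta> t x * of_real (1 / \<rho> t) - k * (cnj (u t x) * V' (\<psi> t x) / w t)"
    unfolding Y_def E_def by (simp add: algebra_simps)
  then have ImY: "Im Y = J / \<rho> t - Im k * R / (cmod (w t))\<^sup>2"
    unfolding quotient J_def by simp
  have flux: "charge_flux t x = of_real (- 2 * Im k * (G / \<rho> t + R / (cmod (w t))\<^sup>2))"
    unfolding charge_flux_def G_def inverse_k using R by (simp add: mult.assoc)
  have div: "Im (k * (\<Sum>j\<in>UNIV. pdx j (\<lambda>x. cnj (u t x) * ux j t x) x)) = Im k * G + J"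
    unfolding charge_divergence G_def J_def by (simp add: algebra_simps)
  have "\<sigma> * vector_derivative (\<lambda>s. charge_density s x) (at t) + charge_flux t x
          = of_real (- 2 * Im Y - 2 * Im k * (G / \<rho> t + R / (cmod (w t))\<^sup>2))"
    by (simp add: time flux)
  also have "\<dots> = of_real (- 2 * (Im k * G + J) / \<rho> t)"
    unfolding ImY using \<rho>_pos[of t] by (simp add: field_simps)
  finally show ?thesis
    by (simp only: div)
qed

lemma charge_conservation:
  assumes "\<And>t. integrable lborel (charge_flux t)"
    and "interval_lebesgue_integrable lborel 0 (ereal t) (\<lambda>s. \<integral>x. charge_flux s x \<partial>lborel)"
    and "\<And>t. spatial_div_integral_vanishes (\<lambda>j x. cnj (u t x) * ux j t x)"
    and "time_diff_under_integral charge_density"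
  shows "\<sigma> * (\<integral>x. charge_density t x \<partial>lborel) + (LBINT s=0..t. \<integral>x. charge_flux s x \<partial>lborel)
           = \<sigma> * (\<integral>x. charge_density 0 x \<partial>lborel)"
proof (rule integrated_balance_law[OF assms(4) charge_balance _ assms(3,1,2)])
  show "bounded_linear (\<lambda>z. of_real (- 2 * Im (k * z) / \<rho> t))" for t
    by (intro bounded_linear_compose[OF bounded_linear_of_real]
        bounded_linear_compose[OF bounded_linear_divide] bounded_linear_const_mult
        bounded_linear_compose[OF bounded_linear_Im] bounded_linear_mult_right)
qed

end

locale scaled_nls_solution_energy = scaled_nls_solution +
  fixes V :: "complex \<Rightarrow> complex" and utx
  assumes n_pos: "n > 0" \<comment> \<open>energy_flux divides by n\<close>
    and V_chain_rule: "(\<phi> has_vector_derivative \<phi>') (at t) \<Longrightarrow>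
           ((\<lambda>s. V (\<phi> s)) has_vector_derivative of_real (Re (cnj \<phi>' * V' (\<phi> t)))) (at t)"
    and utx_t: "((\<lambda>s. ux j s x) has_vector_derivative utx j t x) (at t)"
    and utx_x: "((\<lambda>h. ut t (x + h *\<^sub>R axis j 1)) has_vector_derivative utx j t x) (at 0)"
begin

definition "energy_density t x = (\<Sum>j\<in>UNIV. of_real ((cmod (ux j t x))\<^sup>2))
  + of_real (2 * \<rho> t / (cmod (w t))\<^sup>2) * V (\<psi> t x)"

definition "energy_flux t x = \<sigma> * 2 * C * of_real (Im (1 / k)) * of_real (\<rho> t * (cmod (ut t x))\<^sup>2)
  + of_real (real n / (2 * (cmod (w t))\<^sup>2) * deriv \<rho> t)
    * (cnj (\<psi> t x) * V' (\<psi> t x) - of_real (2 * (real n + 2) / real n) * V (\<psi> t x))"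

lemma energy_density_time_derivative:
  "vector_derivative (\<lambda>s. energy_density s x) (at t)
     = of_real (2 * Re (\<Sum>j\<in>UNIV. cnj (utx j t x) * ux j t x))
       + of_real ((n + 2) * deriv \<rho> t / (cmod (w t))\<^sup>2) * V (\<psi> t x)
       + of_real (2 * \<rho> t / (cmod (w t))\<^sup>2)
         * of_real (Re (cnj (ut t x * w t + u t x * (of_real (- (n / 4) * deriv \<rho> t / \<rho> t) * w t))
                        * V' (\<psi> t x)))"
proof -
  have \<psi>: "((\<lambda>s. \<psi> s x) has_vector_derivative
          ut t x * w t + u t x * (of_real (- (n / 4) * deriv \<rho> t / \<rho> t) * w t)) (at t)"
    using has_vector_derivative_mult[OF ut w_has_vector_derivative] by (simp add: add.commute)
  have gradient: "((\<lambda>s. \<Sum>j\<in>UNIV. ux j s x * cnj (ux j s x)) has_vector_derivative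
          (\<Sum>j\<in>UNIV. ux j t x * cnj (utx j t x) + utx j t x * cnj (ux j t x))) (at t)"
    by (intro has_vector_derivative_sum has_vector_derivative_mult has_vector_derivative_cnj utx_t)
  have "(\<Sum>j\<in>UNIV. ux j t x * cnj (utx j t x) + utx j t x * cnj (ux j t x))
          = (\<Sum>j\<in>UNIV. cnj (utx j t x) * ux j t x) + cnj (\<Sum>j\<in>UNIV. cnj (utx j t x) * ux j t x)"
    by (simp add: sum.distrib mult.commute)
  also have "\<dots> = of_real (2 * Re (\<Sum>j\<in>UNIV. cnj (utx j t x) * ux j t x))"
    by (rule complex_add_cnj)
  finally have gradient_eq: "(\<Sum>j\<in>UNIV. ux j t x * cnj (utx j t x) + utx j t x * cnj (ux j t x))
          = of_real (2 * Re (\<Sum>j\<in>UNIV. cnj (utx j t x) * ux j t x))" .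
  have potential: "((\<lambda>s. of_real (2 * \<rho> s / (cmod (w s))\<^sup>2) * V (\<psi> s x)) has_vector_derivative
          of_real (2 * \<rho> t / (cmod (w t))\<^sup>2)
            * of_real (Re (cnj (ut t x * w t + u t x * (of_real (- (n / 4) * deriv \<rho> t / \<rho> t) * w t))
                           * V' (\<psi> t x)))
          + of_real ((n + 2) * deriv \<rho> t / (cmod (w t))\<^sup>2) * V (\<psi> t x)) (at t)"
    by (rule has_vector_derivative_mult[OF
          has_vector_derivative_of_real[OF potential_weight_has_real_derivative] V_chain_rule[OF \<psi>]])
  have "(\<lambda>s. energy_density s x) = (\<lambda>s. (\<Sum>j\<in>UNIV. ux j s x * cnj (ux j s x))
          + of_real (2 * \<rho> s / (cmod (w s))\<^sup>2) * V (\<psi> s x))"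
    by (simp only: energy_density_def complex_norm_square)
  with has_vector_derivative_add[OF gradient potential]
  have "vector_derivative (\<lambda>s. energy_density s x) (at t)
          = (\<Sum>j\<in>UNIV. ux j t x * cnj (utx j t x) + utx j t x * cnj (ux j t x))
            + (of_real (2 * \<rho> t / (cmod (w t))\<^sup>2)
                 * of_real (Re (cnj (ut t x * w t + u t x * (of_real (- (n / 4) * deriv \<rho> t / \<rho> t) * w t))
                                * V' (\<psi> t x)))
               + of_real ((n + 2) * deriv \<rho> t / (cmod (w t))\<^sup>2) * V (\<psi> t x))"
    by (simp add: vector_derivative_at)
  then show ?thesis
    unfolding gradient_eq by (simp only: ac_simps)
qed

lemma energy_divergence:
  "(\<Sum>j\<in>UNIV. pdx j (\<lambda>x. cnj (ut t x) * ux j t x) x)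
     = (\<Sum>j\<in>UNIV. cnj (utx j t x) * ux j t x) + cnj (ut t x) * \<Delta> t x"
proof -
  have "(\<Sum>j\<in>UNIV. pdx j (\<lambda>x. cnj (ut t x) * ux j t x) x)
          = (\<Sum>j\<in>UNIV. cnj (utx j t x) * ux j t x + cnj (ut t x) * uxx j t x)"
    by (intro sum.cong refl pdx_cnj_mult utx_x uxx)
  then show ?thesis
    by (simp add: sum.distrib sum_distrib_left)
qed

lemma energy_balance:
  "vector_derivative (\<lambda>s. energy_density s x) (at t) + energy_flux t x
     = of_real (2 * Re (\<Sum>j\<in>UNIV. pdx j (\<lambda>x. cnj (ut t x) * ux j t x) x))"
proof -
  obtain c where c: "C = of_real c"
    using C_real by (auto elim: Reals_cases)
  define \<mu> where "\<mu> = - (n / 4) * deriv \<rho> t / \<rho> t"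
  define W where "W = (cmod (w t))\<^sup>2"
  define R where "R = Re (cnj (\<psi> t x) * V' (\<psi> t x))"
  define L where "L = Re (cnj (ut t x) * \<Delta> t x)"
  define A where "A = Re (\<Sum>j\<in>UNIV. cnj (utx j t x) * ux j t x)"
  define U where "U = (cmod (ut t x))\<^sup>2"
  have W: "W > 0"
    using w_nonzero[of t] by (simp add: W_def)
  define Q where "Q = cnj (ut t x) * (1 / w t * V' (\<psi> t x))"
  have "cnj (w t) * V' (\<psi> t x) = of_real W * (1 / w t * V' (\<psi> t x))"
    using w_nonzero[of t] by (simp add: W_def field_simps flip: complex_norm_square)
  then have "cnj (ut t x * w t + u t x * (of_real \<mu> * w t)) * V' (\<psi> t x)
          = of_real W * Q + of_real \<mu> * (cnj (\<psi> t x) * V' (\<psi> t x))"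
    unfolding Q_def by (simp add: algebra_simps)
  then have chain:
      "Re (cnj (ut t x * w t + u t x * (of_real \<mu> * w t)) * V' (\<psi> t x)) = W * Re Q + \<mu> * R"
    by (simp add: R_def)
  have Q: "Re Q = L / \<rho> t - \<sigma> * c * U * Im (1 / k)"
    unfolding Q_def V'_over_w_eq c L_def U_def inverse_k
    by (simp add: algebra_simps flip: complex_norm_square)
  have R: "cnj (\<psi> t x) * V' (\<psi> t x) = of_real R"
    unfolding R_def by (rule cnj_\<psi>_V'_real)
  have div: "Re (\<Sum>j\<in>UNIV. pdx j (\<lambda>x. cnj (ut t x) * ux j t x) x) = A + L"
    unfolding energy_divergence A_def L_def by (simp only: plus_complex.sel)
  show ?thesis
    unfolding energy_density_time_derivative div energy_flux_def
    unfolding \<mu>_def[symmetric] W_def[symmetric] U_def[symmetric] chain Q R c A_def[symmetric]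
    using W \<rho>_pos[of t] n_pos
    by (simp add: \<mu>_def field_simps)
qed

lemma energy_conservation:
  assumes "\<And>t. integrable lborel (energy_flux t)"
    and "interval_lebesgue_integrable lborel 0 (ereal t) (\<lambda>s. \<integral>x. energy_flux s x \<partial>lborel)"
    and "\<And>t. spatial_div_integral_vanishes (\<lambda>j x. cnj (ut t x) * ux j t x)"
    and "time_diff_under_integral energy_density"
  shows "(\<integral>x. energy_density t x \<partial>lborel) + (LBINT s=0..t. \<integral>x. energy_flux s x \<partial>lborel)
           = (\<integral>x. energy_density 0 x \<partial>lborel)"
proof -
  have "1 * (\<integral>x. energy_density t x \<partial>lborel) + (LBINT s=0..t. \<integral>x. energy_flux s x \<partial>lborel)
          = 1 * (\<integral>x. energy_density 0 x \<partial>lborel)"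
  proof (rule integrated_balance_law[OF assms(4) _ _ assms(3,1,2)])
    show "1 * vector_derivative (\<lambda>s. energy_density s x) (at t) + energy_flux t x
            = of_real (2 * Re (\<Sum>j\<in>UNIV. pdx j (\<lambda>x. cnj (ut t x) * ux j t x) x))" for t x
      using energy_balance by simp
    show "bounded_linear (\<lambda>z. of_real (2 * Re z) :: complex)"
      by (intro bounded_linear_compose[OF bounded_linear_of_real] bounded_linear_const_mult bounded_linear_Re)
  qed
  then show ?thesis
    by simp
qed

end

theorem lemma6p2:
  fixes m hbar \<omega>0 \<omega>1 \<theta> \<sigma> :: real
    and a :: "real \<Rightarrow> complex" and b0 :: complex
    and V0 V0' :: "complex \<Rightarrow> complex"
    and u ut :: "real \<Rightarrow> real^'n::finite \<Rightarrow> complex"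
    and ux uxx :: "'n \<Rightarrow> real \<Rightarrow> real^'n \<Rightarrow> complex"
    and eC0 eCn eE0 eEn :: "real \<Rightarrow> real^'n \<Rightarrow> complex"
  assumes hbar: "hbar \<noteq> 0"
    and om0: "-(pi/2) < \<omega>0" "\<omega>0 \<le> pi/2"
    and om1: "-(pi/2) < \<omega>1" "\<omega>1 \<le> pi/2"
    and sign: "\<sigma> = 1 \<or> \<sigma> = -1"
    and a_nz: "\<forall>t. a t \<noteq> 0"
    and a_diff: "\<forall>t. a differentiable (at t)"
    and a_arg: "\<forall>t. Arg (a t) = \<theta>"
    and b0: "b0 \<noteq> 0"
    and C0_real: "C0 m hbar \<omega>0 \<in> \<real>"
    and V0': "\<forall>z. Im (cnj z * V0' z) = 0"
    \<comment> \<open>smoothness: derivatives of u\<close>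
    and ut: "\<forall>t x. ((\<lambda>s. u s x) has_vector_derivative ut t x) (at t)"
    and ux: "\<forall>j t x. ((\<lambda>h. u t (x + h *\<^sub>R axis j 1)) has_vector_derivative ux j t x) (at 0)"
    and uxx: "\<forall>j t x. ((\<lambda>h. ux j t (x + h *\<^sub>R axis j 1)) has_vector_derivative uxx j t x) (at 0)"
    \<comment> \<open>the equation\<close>
    and eq: "\<forall>t x. \<sigma> * \<i> * C0 m hbar \<omega>0 * ut t x
               + kfac \<omega>0 \<theta> \<omega>1 * (of_real (1 / (cmod (a t))\<^sup>2) * (\<Sum>j\<in>UNIV. uxx j t x)
                  - 1 / wstar CARD('n) b0 a t * V0' (u t x * wstar CARD('n) b0 a t)) = 0"
    \<comment> \<open>charge densities\<close>
    and eC0_def: "\<forall>t x. eC0 t x = C0 m hbar \<omega>0 * of_real ((cmod (u t x))\<^sup>2)"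
    and eCn_def: "\<forall>t x. eCn t x = 2 * of_real (Im (1 / kfac \<omega>0 \<theta> \<omega>1)) *
               (of_real (1 / (cmod (a t))\<^sup>2) * (\<Sum>j\<in>UNIV. of_real ((cmod (ux j t x))\<^sup>2))
                + of_real (1 / (cmod (wstar CARD('n) b0 a t))\<^sup>2)
                  * cnj (u t x * wstar CARD('n) b0 a t) * V0' (u t x * wstar CARD('n) b0 a t))"
    \<comment> \<open>regularity / decay for the charge identity\<close>
    and C_int: "\<forall>t. integrable lborel (eC0 t) \<and> integrable lborel (eCn t)"
    and C_int_time: "\<forall>t::real. interval_lebesgue_integrable lborel 0 (ereal t) (\<lambda>s. \<integral>x. eCn s x \<partial>lborel)"
    and C_div: "\<forall>t. spatial_div_integral_vanishes (\<lambda>j x. cnj (u t x) * ux j t x)"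
    and C_dt: "time_diff_under_integral eC0"
  shows "(\<forall>t. \<sigma> * (\<integral>x. eC0 t x \<partial>lborel) + (LBINT s=0..t. (\<integral>x. eCn s x \<partial>lborel))
              = \<sigma> * (\<integral>x. eC0 0 x \<partial>lborel))
    \<and> (\<forall>utx :: 'n \<Rightarrow> real \<Rightarrow> real^'n \<Rightarrow> complex.
        \<comment> \<open>additional assumption on V0 for the energy estimate\<close>
        (\<forall>(\<psi>::real \<Rightarrow> complex) \<psi>' t. (\<psi> has_vector_derivative \<psi>') (at t) \<longrightarrow>
            ((\<lambda>s. V0 (\<psi> s)) has_vector_derivative of_real (Re (cnj \<psi>' * V0' (\<psi> t)))) (at t))
        \<comment> \<open>energy densities\<close>
      \<longrightarrow> (\<forall>t x. eE0 t x = (\<Sum>j\<in>UNIV. of_real ((cmod (ux j t x))\<^sup>2))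
               + of_real (2 * (cmod (a t))\<^sup>2 / (cmod (wstar CARD('n) b0 a t))\<^sup>2)
                 * V0 (u t x * wstar CARD('n) b0 a t))
      \<longrightarrow> (\<forall>t x. eEn t x = \<sigma> * 2 * C0 m hbar \<omega>0 * of_real (Im (1 / kfac \<omega>0 \<theta> \<omega>1))
                 * of_real ((cmod (a t))\<^sup>2 * (cmod (ut t x))\<^sup>2)
               + of_real (real CARD('n) / (2 * (cmod (wstar CARD('n) b0 a t))\<^sup>2)
                   * deriv (\<lambda>s. (cmod (a s))\<^sup>2) t)
                 * (cnj (u t x * wstar CARD('n) b0 a t) * V0' (u t x * wstar CARD('n) b0 a t)
                    - of_real (2 * (real CARD('n) + 2) / real CARD('n))
                      * V0 (u t x * wstar CARD('n) b0 a t)))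
        \<comment> \<open>smoothness: mixed derivatives d_t d_j u = d_j d_t u\<close>
      \<longrightarrow> (\<forall>j t x. ((\<lambda>s. ux j s x) has_vector_derivative utx j t x) (at t)
               \<and> ((\<lambda>h. ut t (x + h *\<^sub>R axis j 1)) has_vector_derivative utx j t x) (at 0))
        \<comment> \<open>regularity / decay for the energy identity\<close>
      \<longrightarrow> (\<forall>t. integrable lborel (eE0 t) \<and> integrable lborel (eEn t))
      \<longrightarrow> (\<forall>t::real. interval_lebesgue_integrable lborel 0 (ereal t) (\<lambda>s. \<integral>x. eEn s x \<partial>lborel))
      \<longrightarrow> (\<forall>t. spatial_div_integral_vanishes (\<lambda>j x. cnj (ut t x) * ux j t x))
      \<longrightarrow> time_diff_under_integral eE0
      \<longrightarrow> (\<forall>t. (\<integral>x. eE0 t x \<partial>lborel) + (LBINT s=0..t. (\<integral>x. eEn s x \<partial>lborel))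
              = (\<integral>x. eE0 0 x \<partial>lborel)))"
proof -
  have "cmod (kfac \<omega>0 \<theta> \<omega>1) = 1"
    unfolding kfac_def by (simp add: norm_divide)
  then interpret scaled_nls_solution
      "CARD('n)" \<sigma> "C0 m hbar \<omega>0" "kfac \<omega>0 \<theta> \<omega>1" b0 a \<theta> V0' u ut ux uxx
    using sign C0_real a_nz a_diff a_arg b0 V0' ut ux uxx eq by unfold_locales auto
  have "eC0 = charge_density" "eCn = charge_flux"
    using eC0_def eCn_def by (simp_all add: fun_eq_iff charge_density_def charge_flux_def)
  with C_int C_int_time C_div C_dt
  have charge: "\<sigma> * (\<integral>x. eC0 t x \<partial>lborel) + (LBINT s=0..t. (\<integral>x. eCn s x \<partial>lborel))
                  = \<sigma> * (\<integral>x. eC0 0 x \<partial>lborel)" for t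
    by (simp add: charge_conservation)
  show ?thesis
  proof (intro conjI allI impI charge, goal_cases)
    case (1 utx t)
    then interpret scaled_nls_solution_energy
        "CARD('n)" \<sigma> "C0 m hbar \<omega>0" "kfac \<omega>0 \<theta> \<omega>1" b0 a \<theta> V0' u ut ux uxx V0 utx
      by unfold_locales auto
    have "eE0 = energy_density" "eEn = energy_flux"
      using 1(2,3) by (simp_all add: fun_eq_iff energy_density_def energy_flux_def)
    with 1(5-8) show ?case
      by (simp add: energy_conservation)
  qed
qed

end
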